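(* Let $f,g\colon\mathbb R\to\mathbb R$ be smooth functions with $f'(x)g'(y)<0$ and $f(x)\neq g(y)$ for all $(x,y)\in\mathbb R^2$, and let $\epsilon>0$. Define \[ h_\epsilon(x,t)=-\frac{(f(u_-+\epsilon)-g(u_++\epsilon))(f(u_--\epsilon)-g(u_+-\epsilon))}{(f(u_-+\epsilon)-f(u_--\epsilon))(g(u_++\epsilon)-g(u_+-\epsilon))},\qquad u_\pm=x\pm t . \] Then for all $(x,t)\in\mathbb R^2$ \[ h_\epsilon(x,t+\epsilon)\,h_\epsilon(x,t-\epsilon)=\bigl(1+h_\epsilon(x+\epsilon,t)\bigr)\bigl(1+h_\epsilon(x-\epsilon,t)\bigr), \] so that $\chi_{m,n}:=h_\epsilon(m\epsilon,n\epsilon)$, $(m,n)\in\mathbb Z^2$, solves the discrete Liouville equation $\chi_{m,n-1}\chi_{m,n+1}=(1+\chi_{m-1,n})(1+\chi_{m+1,n})$. Moreover $\ell(x,t)=\lim_{\epsilon\to0}\epsilon^2h_\epsilon(x,t)$ exists and $e^{\phi(x,t)}:=1/\ell(x,t)$ is given by $e^{\phi}=-4\,f'(u_-)g'(u_+)/(f(u_-)-g(u_+))^2$, which solves $\partial_t^2\phi-\partial_x^2\phi=-2e^{\phi}$. *)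

theory Defs
  imports "HOL-Analysis.Analysis"
begin

definition smooth_fun :: "(real \<Rightarrow> real) \<Rightarrow> bool" where
  "smooth_fun f \<longleftrightarrow> (\<forall>n. \<forall>x. ((deriv ^^ n) f) differentiable (at x))"

definition hfun :: "(real \<Rightarrow> real) \<Rightarrow> (real \<Rightarrow> real) \<Rightarrow> real \<Rightarrow> real \<Rightarrow> real \<Rightarrow> real" where
  "hfun f g \<epsilon> x t =
     - ((f (x - t + \<epsilon>) - g (x + t + \<epsilon>)) * (f (x - t - \<epsilon>) - g (x + t - \<epsilon>)))
     / ((f (x - t + \<epsilon>) - f (x - t - \<epsilon>)) * (g (x + t + \<epsilon>) - g (x + t - \<epsilon>)))"

end

theory Submission
  imports Defs
begin

text \<open>
  Writing \<open>F\<^sub>k = f(u\<^sub>- + k\<epsilon>)\<close> and \<open>G\<^sub>k = g(u\<^sub>+ + k\<epsilon>)\<close>,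
  both sides of the shifted identity for \<open>h\<^sub>\<epsilon>\<close> are rational functions of
  \<open>F\<^sub>-\<^sub>2, F\<^sub>0, F\<^sub>2, G\<^sub>-\<^sub>2, G\<^sub>0, G\<^sub>2\<close>, and the identity reduces to the elementary
  relation \<open>1 + h = -(F\<^sub>2 - G\<^sub>0)(F\<^sub>0 - G\<^sub>2)/((F\<^sub>2 - F\<^sub>0)(G\<^sub>2 - G\<^sub>0))\<close> between cross-ratios.
  It needs only that the denominators are nonzero, i.e. that \<open>f\<close> and \<open>g\<close> are injective,
  which follows from Rolle's theorem since their derivatives never vanish.

  Continuum limit.  \<open>\<epsilon>\<^sup>2 h\<^sub>\<epsilon>\<close> is the numerator of \<open>h\<^sub>\<epsilon>\<close> over a product of two symmetric
  difference quotients, so it tends to \<open>(f(u\<^sub>-) - g(u\<^sub>+))\<^sup>2/(-4 f'(u\<^sub>-) g'(u\<^sub>+)) = 1/\<rho>(u\<^sub>-,u\<^sub>+)\<close>.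

  In light-cone coordinates \<open>\<phi>(x,t) = \<Phi>(x - t, x + t)\<close> with
  \<open>\<Phi> = ln \<rho>\<close>.  Differentiating \<open>\<Phi>\<close> twice along a path of constant velocity \<open>(\<alpha>,\<beta>)\<close> gives
  \<open>\<alpha>\<^sup>2\<Phi>\<^sub>u\<^sub>u + 2\<alpha>\<beta>\<Phi>\<^sub>u\<^sub>v + \<beta>\<^sup>2\<Phi>\<^sub>v\<^sub>v\<close>, hence \<open>\<phi>\<^sub>t\<^sub>t - \<phi>\<^sub>x\<^sub>x = -4\<Phi>\<^sub>u\<^sub>v\<close>, and \<open>\<Phi>\<^sub>u\<^sub>v = \<rho>/2\<close>.
\<close>

lemma one_plus_cross_ratio:
  fixes A B C D :: real
  assumes "A \<noteq> B" "C \<noteq> D"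
  shows "1 + - ((A - C) * (B - D)) / ((A - B) * (C - D)) = - ((A - D) * (B - C)) / ((A - B) * (C - D))"
proof -
  have "(A - B) * (C - D) \<noteq> 0"
    using assms by simp
  then show ?thesis
    unfolding add_divide_eq_iff[OF \<open>(A - B) * (C - D) \<noteq> 0\<close>] by (simp add: algebra_simps)
qed

lemma cross_ratio_identity:
  fixes Fp F0 Fm Gp G0 Gm :: real
  assumes "Fp \<noteq> F0" "F0 \<noteq> Fm" "Gp \<noteq> G0" "G0 \<noteq> Gm"
  shows "(- ((F0 - Gp) * (Fm - G0)) / ((F0 - Fm) * (Gp - G0)))
           * (- ((Fp - G0) * (F0 - Gm)) / ((Fp - F0) * (G0 - Gm)))
       = (1 + - ((Fp - Gp) * (F0 - G0)) / ((Fp - F0) * (Gp - G0)))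
           * (1 + - ((F0 - G0) * (Fm - Gm)) / ((F0 - Fm) * (G0 - Gm)))"
  unfolding one_plus_cross_ratio[OF assms(1,3)] one_plus_cross_ratio[OF assms(2,4)]
  by (simp add: field_simps)

lemma inj_if_deriv_nonzero:
  fixes h h' :: "real \<Rightarrow> real"
  assumes deriv: "\<And>x. (h has_real_derivative h' x) (at x)" and nonzero: "\<And>x. h' x \<noteq> 0"
  shows "inj h"
proof (rule linorder_injI)
  fix u v :: real
  assume "u < v"
  show "h u \<noteq> h v"
  proof
    assume "h u = h v"
    moreover have "continuous_on {u..v} h"
      using deriv by (meson DERIV_isCont continuous_at_imp_continuous_on)
    moreover have "h differentiable (at x)" for x
      using deriv real_differentiable_def by blast
    ultimately obtain z where "(h has_real_derivative 0) (at z)"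
      using Rolle[OF \<open>u < v\<close>] by blast
    then show False
      using DERIV_unique[OF _ deriv] nonzero by metis
  qed
qed

lemma hfun_liouville_shift:
  fixes f g :: "real \<Rightarrow> real"
  assumes "inj f" "inj g" "\<epsilon> \<noteq> 0"
  shows "hfun f g \<epsilon> x (t + \<epsilon>) * hfun f g \<epsilon> x (t - \<epsilon>)
       = (1 + hfun f g \<epsilon> (x + \<epsilon>) t) * (1 + hfun f g \<epsilon> (x - \<epsilon>) t)"
proof -
  have "f (x - t + 2 * \<epsilon>) \<noteq> f (x - t)" "f (x - t) \<noteq> f (x - t - 2 * \<epsilon>)"
    "g (x + t + 2 * \<epsilon>) \<noteq> g (x + t)" "g (x + t) \<noteq> g (x + t - 2 * \<epsilon>)"
    using assms by (auto simp: inj_eq)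
  from cross_ratio_identity[OF this] show ?thesis
    by (simp add: hfun_def algebra_simps)
qed

lemma hfun_lattice_liouville:
  fixes f g :: "real \<Rightarrow> real" and m n :: int
  assumes "inj f" "inj g" "\<epsilon> \<noteq> 0"
  defines "X \<equiv> \<lambda>(m::int) (n::int). hfun f g \<epsilon> (of_int m * \<epsilon>) (of_int n * \<epsilon>)"
  shows "X m (n - 1) * X m (n + 1) = (1 + X (m - 1) n) * (1 + X (m + 1) n)"
  using hfun_liouville_shift[OF assms(1-3), of "of_int m * \<epsilon>" "of_int n * \<epsilon>"]
  by (simp add: X_def algebra_simps)

lemma smooth_fun_has_deriv:
  assumes "smooth_fun h"
  shows "((deriv ^^ n) h has_real_derivative (deriv ^^ Suc n) h x) (at x)"
  using assms unfolding smooth_fun_def by (simp add: DERIV_deriv_iff_real_differentiable)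

lemma symmetric_difference_quotient:
  assumes "(h has_real_derivative D) (at a)"
  shows "((\<lambda>e. (h (a + e) - h (a - e)) / e) \<longlongrightarrow> 2 * D) (at_right 0)"
proof -
  have "((\<lambda>e. h (a - e)) has_real_derivative D * -1) (at 0)"
    by (rule DERIV_chain2) (use assms in simp, auto intro!: derivative_eq_intros)
  then have "((\<lambda>e. (h (a + e) - h a) / e - (h (a - e) - h a) / e) \<longlongrightarrow> D - - D) (at 0)"
    using assms by (intro tendsto_diff) (simp_all add: DERIV_def)
  then have "((\<lambda>e. (h (a + e) - h (a - e)) / e) \<longlongrightarrow> 2 * D) (at 0)"
    by (simp add: diff_divide_distrib)
  then show ?thesis
    by (rule filterlim_mono) (simp_all add: at_le)
qed

lemma ln_square_deriv:
  assumes "(h has_real_derivative h') (at s)" "h s \<noteq> 0"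
  shows "((\<lambda>s. ln ((h s)\<^sup>2)) has_real_derivative 2 * h' / h s) (at s)"
proof -
  have "((\<lambda>s. ln ((h s)\<^sup>2)) has_real_derivative 1 / (h s)\<^sup>2 * (2 * h s * h')) (at s)"
    using assms by (auto intro!: derivative_eq_intros)
  then show ?thesis
    using assms(2) by (simp add: power2_eq_square)
qed

lemma light_cone_paths:
  "((\<lambda>s. x - s) has_real_derivative - 1) (at s)" "((\<lambda>s. x + s) has_real_derivative 1) (at s)"
  "((\<lambda>y. y - t) has_real_derivative 1) (at y)" "((\<lambda>y. y + t) has_real_derivative 1) (at y)"
  by (auto intro!: derivative_eq_intros)

text \<open>These are exactly the hypotheses under which \<open>e\<^sup>\<phi>\<close> below is
  positive and smooth enough to be differentiated twice.\<close>
locale liouville_pair =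
  fixes f f' f'' f''' g g' g'' g''' :: "real \<Rightarrow> real"
  assumes f_deriv: "\<And>u. (f has_real_derivative f' u) (at u)"
    and f'_deriv: "\<And>u. (f' has_real_derivative f'' u) (at u)"
    and f''_deriv: "\<And>u. (f'' has_real_derivative f''' u) (at u)"
    and g_deriv: "\<And>v. (g has_real_derivative g' v) (at v)"
    and g'_deriv: "\<And>v. (g' has_real_derivative g'' v) (at v)"
    and g''_deriv: "\<And>v. (g'' has_real_derivative g''' v) (at v)"
    and derivs_opposite: "\<And>u v. f' u * g' v < 0"
    and values_apart: "\<And>u v. f u \<noteq> g v"
begin

lemma f'_nonzero: "f' u \<noteq> 0" and g'_nonzero: "g' v \<noteq> 0"
  using derivs_opposite[of u v] by auto

lemma f_minus_g_nonzero: "f u - g v \<noteq> 0"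
  using values_apart[of u v] by simp

text \<open>The density \<open>e\<^sup>\<phi>\<close> of the Liouville field, in light-cone coordinates \<open>u = x - t\<close>,
  \<open>v = x + t\<close>.\<close>
definition rho :: "real \<Rightarrow> real \<Rightarrow> real" where
  "rho u v = - 4 * f' u * g' v / (f u - g v)\<^sup>2"

lemma rho_pos: "rho u v > 0"
  unfolding rho_def
  by (intro divide_pos_pos) (use derivs_opposite[of u v] f_minus_g_nonzero[of u v] in auto)

text \<open>The continuum limit: \<open>\<epsilon>\<^sup>2 h\<^sub>\<epsilon>(x,t)\<close> is the numerator of \<open>h\<^sub>\<epsilon>\<close> divided by two
  symmetric difference quotients of \<open>f\<close> and \<open>g\<close>, so it tends to the reciprocal density.\<close>
lemma hfun_continuum_limit:
  "((\<lambda>e. e\<^sup>2 * hfun f g e x t) \<longlongrightarrow> 1 / rho (x - t) (x + t)) (at_right 0)"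
proof -
  have shift: "((\<lambda>e. h (y + e)) \<longlongrightarrow> h y) (at_right 0)" "((\<lambda>e. h (y - e)) \<longlongrightarrow> h y) (at_right 0)"
    if "\<And>z. isCont h z" for h :: "real \<Rightarrow> real" and y
    using that by (auto intro!: isCont_tendsto_compose[where g=h] tendsto_eq_intros)
  have continuous: "isCont f z" "isCont g z" for z
    using f_deriv g_deriv by (blast intro: DERIV_isCont)+
  have numerator: "((\<lambda>e. - ((f (x - t + e) - g (x + t + e)) * (f (x - t - e) - g (x + t - e))))
      \<longlongrightarrow> - ((f (x - t) - g (x + t)) * (f (x - t) - g (x + t)))) (at_right 0)"
    by (intro tendsto_intros shift continuous)
  have quotients: "((\<lambda>e. (f (x - t + e) - f (x - t - e)) / e * ((g (x + t + e) - g (x + t - e)) / e))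
      \<longlongrightarrow> 2 * f' (x - t) * (2 * g' (x + t))) (at_right 0)"
    by (intro tendsto_mult symmetric_difference_quotient f_deriv g_deriv)
  have "1 / rho (x - t) (x + t)
      = - ((f (x - t) - g (x + t)) * (f (x - t) - g (x + t))) / (2 * f' (x - t) * (2 * g' (x + t)))"
    using f'_nonzero g'_nonzero by (simp add: rho_def power2_eq_square)
  then have "((\<lambda>e. - ((f (x - t + e) - g (x + t + e)) * (f (x - t - e) - g (x + t - e)))
      / ((f (x - t + e) - f (x - t - e)) / e * ((g (x + t + e) - g (x + t - e)) / e)))
      \<longlongrightarrow> 1 / rho (x - t) (x + t)) (at_right 0)"
    using tendsto_divide[OF numerator quotients] f'_nonzero g'_nonzero by simp
  moreover have "\<forall>\<^sub>F e in at_right 0. - ((f (x - t + e) - g (x + t + e)) * (f (x - t - e) - g (x + t - e)))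
      / ((f (x - t + e) - f (x - t - e)) / e * ((g (x + t + e) - g (x + t - e)) / e))
      = e\<^sup>2 * hfun f g e x t"
    by (rule eventually_mono[OF eventually_at_right_less]) (simp add: hfun_def power2_eq_square)
  ultimately show ?thesis
    using tendsto_cong by fastforce
qed

lemma derivs_chain:
  assumes "(p has_real_derivative p') (at s)"
  shows "((\<lambda>s. f (p s)) has_real_derivative f' (p s) * p') (at s)"
    and "((\<lambda>s. f' (p s)) has_real_derivative f'' (p s) * p') (at s)"
    and "((\<lambda>s. f'' (p s)) has_real_derivative f''' (p s) * p') (at s)"
    and "((\<lambda>s. g (p s)) has_real_derivative g' (p s) * p') (at s)"
    and "((\<lambda>s. g' (p s)) has_real_derivative g'' (p s) * p') (at s)"
    and "((\<lambda>s. g'' (p s)) has_real_derivative g''' (p s) * p') (at s)"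
  using assms f_deriv f'_deriv f''_deriv g_deriv g'_deriv g''_deriv by (blast intro: DERIV_chain2)+

text \<open>The Liouville field \<open>\<Phi> = ln \<rho>\<close> in light-cone coordinates, and its first and pure second
  partial derivatives; the mixed partial \<open>\<Phi>\<^sub>u\<^sub>v\<close> turns out to be \<open>\<rho>/2\<close>.\<close>
definition Phi :: "real \<Rightarrow> real \<Rightarrow> real" where
  "Phi u v = ln (rho u v)"

definition Phi_u :: "real \<Rightarrow> real \<Rightarrow> real" where
  "Phi_u u v = f'' u / f' u - 2 * f' u / (f u - g v)"

definition Phi_v :: "real \<Rightarrow> real \<Rightarrow> real" where
  "Phi_v u v = g'' v / g' v + 2 * g' v / (f u - g v)"

definition Phi_uu :: "real \<Rightarrow> real \<Rightarrow> real" where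
  "Phi_uu u v = (f''' u * f' u - (f'' u)\<^sup>2) / (f' u)\<^sup>2
     - 2 * (f'' u * (f u - g v) - (f' u)\<^sup>2) / (f u - g v)\<^sup>2"

definition Phi_vv :: "real \<Rightarrow> real \<Rightarrow> real" where
  "Phi_vv u v = (g''' v * g' v - (g'' v)\<^sup>2) / (g' v)\<^sup>2
     + 2 * (g'' v * (f u - g v) + (g' v)\<^sup>2) / (f u - g v)\<^sup>2"

text \<open>\<open>\<Phi>\<close> as a difference of logarithms of positive quantities, which is how it is differentiated.\<close>
lemma Phi_split: "Phi u v = ln (- 4 * f' u * g' v) - ln ((f u - g v)\<^sup>2)"
  using derivs_opposite[of u v] f_minus_g_nonzero[of u v]
  unfolding Phi_def rho_def by (subst ln_div) (auto simp: mult.assoc)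

context
  fixes p q :: "real \<Rightarrow> real" and \<alpha> \<beta> :: real
  assumes p_deriv: "\<And>s. (p has_real_derivative \<alpha>) (at s)"
    and q_deriv: "\<And>s. (q has_real_derivative \<beta>) (at s)"
begin

lemma difference_along_path:
  "((\<lambda>s. f (p s) - g (q s)) has_real_derivative \<alpha> * f' (p s) - \<beta> * g' (q s)) (at s)"
  by (rule derivative_eq_intros derivs_chain p_deriv q_deriv refl | simp)+

lemma Phi_along_path:
  "((\<lambda>s. Phi (p s) (q s)) has_real_derivative \<alpha> * Phi_u (p s) (q s) + \<beta> * Phi_v (p s) (q s)) (at s)"
proof -
  have nz: "f' (p s) \<noteq> 0" "g' (q s) \<noteq> 0" "f (p s) - g (q s) \<noteq> 0"
    using f'_nonzero g'_nonzero f_minus_g_nonzero by auto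
  have pos: "- 4 * f' (p s) * g' (q s) > 0"
    using derivs_opposite by (simp add: mult.assoc)
  have first: "((\<lambda>s. ln (- 4 * f' (p s) * g' (q s))) has_real_derivative
      \<alpha> * (f'' (p s) / f' (p s)) + \<beta> * (g'' (q s) / g' (q s))) (at s)"
    by (rule derivative_eq_intros derivs_chain p_deriv q_deriv refl pos)+ (use nz in \<open>simp add: field_simps\<close>)
  have second: "((\<lambda>s. ln ((f (p s) - g (q s))\<^sup>2)) has_real_derivative
      2 * (\<alpha> * f' (p s) - \<beta> * g' (q s)) / (f (p s) - g (q s))) (at s)"
    by (rule ln_square_deriv[OF difference_along_path nz(3)])
  show ?thesis
    using DERIV_diff[OF first second]
    unfolding Phi_split Phi_u_def Phi_v_def by (simp add: algebra_simps diff_divide_distrib)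
qed

text \<open>Derivatives of the partials along the path; the cross terms identify \<open>\<Phi>\<^sub>u\<^sub>v = \<rho>/2\<close>.
  Abbreviating \<open>D = f - g\<close> keeps the rational normalisation tractable.\<close>
lemma Phi_u_along_path:
  "((\<lambda>s. Phi_u (p s) (q s)) has_real_derivative
      \<alpha> * Phi_uu (p s) (q s) + \<beta> * (rho (p s) (q s) / 2)) (at s)"
proof -
  define D where "D = f (p s) - g (q s)"
  have nz: "f' (p s) \<noteq> 0" "D \<noteq> 0"
    using f'_nonzero f_minus_g_nonzero by (auto simp: D_def)
  show ?thesis
    unfolding Phi_u_def
    apply (rule derivative_eq_intros derivs_chain difference_along_path p_deriv q_deriv refl
        nz[unfolded D_def])+
    unfolding D_def[symmetric] Phi_uu_def rho_def
    using nz by (simp add: field_simps) algebra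
qed

lemma Phi_v_along_path:
  "((\<lambda>s. Phi_v (p s) (q s)) has_real_derivative
      \<alpha> * (rho (p s) (q s) / 2) + \<beta> * Phi_vv (p s) (q s)) (at s)"
proof -
  define D where "D = f (p s) - g (q s)"
  have nz: "g' (q s) \<noteq> 0" "D \<noteq> 0"
    using g'_nonzero f_minus_g_nonzero by (auto simp: D_def)
  show ?thesis
    unfolding Phi_v_def
    apply (rule derivative_eq_intros derivs_chain difference_along_path p_deriv q_deriv refl
        nz[unfolded D_def])+
    unfolding D_def[symmetric] Phi_vv_def rho_def
    using nz by (simp add: field_simps) algebra
qed

lemma Phi_second_along_path:
  "((\<lambda>s. \<alpha> * Phi_u (p s) (q s) + \<beta> * Phi_v (p s) (q s)) has_real_derivative
      \<alpha>\<^sup>2 * Phi_uu (p s) (q s) + \<alpha> * \<beta> * rho (p s) (q s) + \<beta>\<^sup>2 * Phi_vv (p s) (q s)) (at s)"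
  using DERIV_add[OF DERIV_cmult[OF Phi_u_along_path, of \<alpha>] DERIV_cmult[OF Phi_v_along_path, of \<beta>]]
  by (simp add: algebra_simps power2_eq_square)

end

definition phi :: "real \<Rightarrow> real \<Rightarrow> real" where
  "phi x t = Phi (x - t) (x + t)"

lemma exp_phi: "exp (phi x t) = rho (x - t) (x + t)"
  using rho_pos by (simp add: phi_def Phi_def)

lemma phi_time_derivatives:
  "((\<lambda>s. phi x s) has_real_derivative Phi_v (x - s) (x + s) - Phi_u (x - s) (x + s)) (at s)"
  "((\<lambda>s. Phi_v (x - s) (x + s) - Phi_u (x - s) (x + s)) has_real_derivative
      Phi_uu (x - s) (x + s) - rho (x - s) (x + s) + Phi_vv (x - s) (x + s)) (at s)"
  using Phi_along_path[OF light_cone_paths(1,2)] Phi_second_along_path[OF light_cone_paths(1,2)]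
  by (simp_all add: phi_def)

lemma phi_space_derivatives:
  "((\<lambda>y. phi y t) has_real_derivative Phi_u (y - t) (y + t) + Phi_v (y - t) (y + t)) (at y)"
  "((\<lambda>y. Phi_u (y - t) (y + t) + Phi_v (y - t) (y + t)) has_real_derivative
      Phi_uu (y - t) (y + t) + rho (y - t) (y + t) + Phi_vv (y - t) (y + t)) (at y)"
  using Phi_along_path[OF light_cone_paths(3,4)] Phi_second_along_path[OF light_cone_paths(3,4)]
  by (simp_all add: phi_def)

lemma deriv_phi_time: "deriv (\<lambda>s'. phi x s') = (\<lambda>s. Phi_v (x - s) (x + s) - Phi_u (x - s) (x + s))"
  using phi_time_derivatives(1) by (intro ext DERIV_imp_deriv)

lemma deriv_phi_space: "deriv (\<lambda>y'. phi y' t) = (\<lambda>y. Phi_u (y - t) (y + t) + Phi_v (y - t) (y + t))"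
  using phi_space_derivatives(1) by (intro ext DERIV_imp_deriv)

text \<open>Liouville's equation \<open>\<phi>\<^sub>t\<^sub>t - \<phi>\<^sub>x\<^sub>x = -4 \<Phi>\<^sub>u\<^sub>v = -2 e\<^sup>\<phi>\<close>.\<close>
lemma phi_wave_equation:
  "deriv (\<lambda>s. deriv (\<lambda>s'. phi x s') s) t - deriv (\<lambda>y. deriv (\<lambda>y'. phi y' t) y) x = - 2 * exp (phi x t)"
  using DERIV_imp_deriv[OF phi_time_derivatives(2)] DERIV_imp_deriv[OF phi_space_derivatives(2)]
  by (simp add: deriv_phi_time deriv_phi_space exp_phi)

lemma liouville_continuum_limit:
  "\<exists>L :: real \<Rightarrow> real \<Rightarrow> real.
      (\<forall>x t. ((\<lambda>e. e\<^sup>2 * hfun f g e x t) \<longlongrightarrow> L x t) (at_right 0))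
    \<and> (\<forall>x t. L x t > 0)
    \<and> (let \<phi> = (\<lambda>x t. ln (1 / L x t)) in
         (\<forall>x t. exp (\<phi> x t) = - 4 * f' (x - t) * g' (x + t) / (f (x - t) - g (x + t))\<^sup>2)
       \<and> (\<forall>x t. (\<lambda>s. \<phi> x s) differentiable (at t) \<and> (\<lambda>y. \<phi> y t) differentiable (at x)
              \<and> (\<lambda>s. deriv (\<lambda>s'. \<phi> x s') s) differentiable (at t)
              \<and> (\<lambda>y. deriv (\<lambda>y'. \<phi> y' t) y) differentiable (at x)
              \<and> deriv (\<lambda>s. deriv (\<lambda>s'. \<phi> x s') s) t - deriv (\<lambda>y. deriv (\<lambda>y'. \<phi> y' t) y) x
                  = - 2 * exp (\<phi> x t)))"
proof -
  have ln_phi: "ln (1 / (1 / rho (x - t) (x + t))) = phi x t" for x t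
    by (simp add: phi_def Phi_def)
  have exp_phi_explicit: "exp (phi x t) = - 4 * f' (x - t) * g' (x + t) / (f (x - t) - g (x + t))\<^sup>2" for x t
    by (simp add: exp_phi rho_def)
  have differentiable: "(\<lambda>s. phi x s) differentiable (at t)" "(\<lambda>y. phi y t) differentiable (at x)"
    "(\<lambda>s. deriv (\<lambda>s'. phi x s') s) differentiable (at t)" "(\<lambda>y. deriv (\<lambda>y'. phi y' t) y) differentiable (at x)"
    for x t
    unfolding deriv_phi_time deriv_phi_space real_differentiable_def
    using phi_time_derivatives phi_space_derivatives by blast+
  show ?thesis
    unfolding Let_def
    by (intro exI[of _ "\<lambda>x t. 1 / rho (x - t) (x + t)"] conjI allI)
      (simp_all only: ln_phi exp_phi_explicit differentiable phi_wave_equation hfun_continuum_limit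
        rho_pos zero_less_divide_1_iff simp_thms)
qed

end

theorem mainTheorem1:
  fixes f g :: "real \<Rightarrow> real" and \<epsilon> :: real
  assumes "smooth_fun f" and "smooth_fun g"
    and "\<And>x y. deriv f x * deriv g y < 0"
    and "\<And>x y. f x \<noteq> g y"
    and "\<epsilon> > 0"
  shows "(\<forall>x t. hfun f g \<epsilon> x (t + \<epsilon>) * hfun f g \<epsilon> x (t - \<epsilon>)
              = (1 + hfun f g \<epsilon> (x + \<epsilon>) t) * (1 + hfun f g \<epsilon> (x - \<epsilon>) t))
    \<and> (let X = (\<lambda>(m::int) (n::int). hfun f g \<epsilon> (of_int m * \<epsilon>) (of_int n * \<epsilon>)) in
        \<forall>m n. X m (n - 1) * X m (n + 1) = (1 + X (m - 1) n) * (1 + X (m + 1) n))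
    \<and> (\<exists>L :: real \<Rightarrow> real \<Rightarrow> real.
          (\<forall>x t. ((\<lambda>e. e\<^sup>2 * hfun f g e x t) \<longlongrightarrow> L x t) (at_right 0))
        \<and> (\<forall>x t. L x t > 0)
        \<and> (let \<phi> = (\<lambda>x t. ln (1 / L x t)) in
             (\<forall>x t. exp (\<phi> x t) = - 4 * deriv f (x - t) * deriv g (x + t) / (f (x - t) - g (x + t))\<^sup>2)
           \<and> (\<forall>x t. (\<lambda>s. \<phi> x s) differentiable (at t) \<and> (\<lambda>y. \<phi> y t) differentiable (at x)
                  \<and> (\<lambda>s. deriv (\<lambda>s'. \<phi> x s') s) differentiable (at t)
                  \<and> (\<lambda>y. deriv (\<lambda>y'. \<phi> y' t) y) differentiable (at x)
                  \<and> deriv (\<lambda>s. deriv (\<lambda>s'. \<phi> x s') s) t - deriv (\<lambda>y. deriv (\<lambda>y'. \<phi> y' t) y) x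
                      = - 2 * exp (\<phi> x t))))"
proof -
  interpret liouville_pair f "deriv f" "deriv (deriv f)" "deriv (deriv (deriv f))"
      g "deriv g" "deriv (deriv g)" "deriv (deriv (deriv g))"
    using smooth_fun_has_deriv[OF assms(1), of 0] smooth_fun_has_deriv[OF assms(1), of 1]
      smooth_fun_has_deriv[OF assms(1), of 2] smooth_fun_has_deriv[OF assms(2), of 0]
      smooth_fun_has_deriv[OF assms(2), of 1] smooth_fun_has_deriv[OF assms(2), of 2] assms(3,4)
    by unfold_locales (simp_all add: numeral_2_eq_2)
  have inj: "inj f" "inj g"
    using inj_if_deriv_nonzero f_deriv f'_nonzero g_deriv g'_nonzero by blast+
  have "\<epsilon> \<noteq> 0"
    using assms(5) by simp
  show ?thesis
    unfolding Let_def
    by (intro conjI allI hfun_liouville_shift[OF inj \<open>\<epsilon> \<noteq> 0\<close>]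
        hfun_lattice_liouville[OF inj \<open>\<epsilon> \<noteq> 0\<close>] liouville_continuum_limit[unfolded Let_def])
qed

end
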